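(* Let $n\in\mathbb N$ and $M>0$. Let $X,Y$ be independent, identically distributed real random variables with $|X|\le\big(\frac{2n-1}{3M}\big)^{\frac{1}{2n-1}}$ almost surely and ${\bf E}[X^{2j-1}]=0$ for all $j=1,\dots,n$. Then $${\bf E}\big[|X-Y|^{2n+1}\big]-2\,{\bf E}\big[X^{2n+1}\big]-M\big({\bf E}[X^{2n}]\big)^2\ge 0.$$ *)

theory Defs
  imports "HOL-Probability.Probability"
begin

end

theory Submission
  imports Defs
begin

text \<open>
  Let F(x,y) = |x - y|^(2n+1) - x^(2n+1) - y^(2n+1) - K x^(2n) y^(2n) (moment_integrand).
  By independence and equal distribution the claimed quantity is E F(X,Y). On the square
  [-a,a]^2 with K a^(2n-1) <= (2n-1)/3, F is bounded below by Z(x,y) = h(x,y) + h(y,x)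
  (h = minorant_term), where every monomial of h(x,y) has the form x^(2l+1) g(y) with l < n.
  Independence and the vanishing odd moments give E Z(X,Y) = 0, hence E F(X,Y) >= 0.

  For 0 <= x and y <= x the pointwise bound comes from the binomial expansion of (x - y)^(2n+1):
  its odd terms below the top one cancel against h(y,x), and the rest of Z is dominated by the
  even term (2n+1) x y^(2n), which is where the bound on K a^(2n-1) enters. For x, y <= 0 it is
  AM-GM: K (xy)^(2n) <= K/2 (xy)^(2n-1) (x^2 + y^2).
\<close>

definition odd_binomial_terms :: "nat \<Rightarrow> real \<Rightarrow> real \<Rightarrow> real" where
  "odd_binomial_terms n u v =
     (\<Sum>l<n. real ((2*n+1) choose (2*l+1)) * v^(2*l+1) * u^(2*n-2*l))"

lemma odd_binomial_terms_uminus_right: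
  "odd_binomial_terms n u (-v) = - odd_binomial_terms n u v"
  by (simp add: odd_binomial_terms_def sum_negf[symmetric])

lemma odd_binomial_terms_nonneg: "0 \<le> u \<Longrightarrow> 0 \<le> v \<Longrightarrow> 0 \<le> odd_binomial_terms n u v"
  by (simp add: odd_binomial_terms_def sum_nonneg)

lemma odd_binomial_terms_0_left [simp]: "odd_binomial_terms n 0 v = 0"
  by (simp add: odd_binomial_terms_def power_0_left)

lemma power_odd_binomial_ge:
  fixes u v :: real
  assumes "n \<ge> 1" and "0 \<le> u"
  shows "u^(2*n+1) + (2 * real n + 1) * u * v^(2*n) + odd_binomial_terms n u v + v^(2*n+1)
    \<le> (u+v)^(2*n+1)"
proof -
  define even_term where "even_term l = real ((2*n+1) choose (2*l)) * v^(2*l) * u^(2*n+1-2*l)" for l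
  define odd_term where "odd_term l = real ((2*n+1) choose (2*l+1)) * v^(2*l+1) * u^(2*n-2*l)" for l
  have "(u+v)^(2*n+1) = (\<Sum>k\<le>Suc (2*n). real ((2*n+1) choose k) * v^k * u^(2*n+1-k))"
    unfolding add.commute[of u v] binomial_ring by simp
  also have "\<dots> = (\<Sum>l\<le>n. even_term l + odd_term l)"
    by (subst sum.in_pairs_0) (simp add: even_term_def odd_term_def)
  also have "\<dots> = sum even_term {..n} + odd_binomial_terms n u v + v^(2*n+1)"
    by (simp add: sum.distrib lessThan_Suc_atMost[symmetric] odd_term_def odd_binomial_terms_def)
  finally have expand: "(u+v)^(2*n+1) = sum even_term {..n} + odd_binomial_terms n u v + v^(2*n+1)" .
  have "even_term 0 + even_term n = sum even_term {0, n}"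
    using assms(1) by simp
  also have "\<dots> \<le> sum even_term {..n}"
    by (rule sum_mono2) (auto simp: even_term_def \<open>0 \<le> u\<close>)
  finally have "even_term 0 + even_term n \<le> sum even_term {..n}" .
  moreover have "even_term 0 + even_term n = u^(2*n+1) + (2 * real n + 1) * u * v^(2*n)"
    by (simp add: even_term_def)
  ultimately show ?thesis
    using expand by linarith
qed

definition moment_integrand :: "nat \<Rightarrow> real \<Rightarrow> real \<Rightarrow> real \<Rightarrow> real" where
  "moment_integrand n K x y =
     \<bar>x - y\<bar>^(2*n+1) - x^(2*n+1) - y^(2*n+1) - K * x^(2*n) * y^(2*n)"

definition minorant_term :: "nat \<Rightarrow> real \<Rightarrow> real \<Rightarrow> real \<Rightarrow> real" where
  "minorant_term n K x y =
     - odd_binomial_terms n (max y 0) x - K/2 * x^(2*n-1) * (min y 0)^(2*n+1)"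

lemma minorant_le_moment_integrand_nonpos:
  fixes x y K :: real
  assumes "n \<ge> 1" and "K \<ge> 0" and "x \<le> 0" and "y \<le> 0"
  shows "minorant_term n K x y + minorant_term n K y x \<le> moment_integrand n K x y"
proof -
  obtain m where m: "n = Suc m"
    using assms(1) by (cases n) auto
  define w where "w = (x*y)^(2*m+1)"
  have "0 \<le> w"
    unfolding w_def using assms(3,4) by (simp add: zero_le_mult_iff)
  then have "0 \<le> K/2 * w * (x-y)^2"
    using assms(2) by simp
  then have "K * w * (x*y) \<le> K/2 * w * y^2 + K/2 * w * x^2"
    by (simp add: power2_eq_square algebra_simps)
  moreover have "minorant_term n K x y = - K/2 * w * y^2" "minorant_term n K y x = - K/2 * w * x^2"
    using assms(3,4) by (simp_all add: minorant_term_def w_def m power_mult_distrib power2_eq_square)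
  moreover have "x^(2*n+1) \<le> 0" "y^(2*n+1) \<le> 0"
    using assms(3,4) by (simp_all add: mult_nonpos_nonneg)
  moreover have "K * x^(2*n) * y^(2*n) = K * w * (x*y)"
    by (simp add: w_def m power_mult_distrib)
  moreover have "0 \<le> \<bar>x - y\<bar>^(2*n+1)"
    by simp
  ultimately show ?thesis
    unfolding moment_integrand_def by linarith
qed

lemma moment_integrand_ge_binomial:
  fixes x y K :: real
  assumes "n \<ge> 1" and "0 \<le> x" and "y \<le> x"
  shows "(2*real n + 1) * (x * y^(2*n)) - odd_binomial_terms n x y - 2 * y^(2*n+1)
      - K * x^(2*n) * y^(2*n) \<le> moment_integrand n K x y"
proof -
  have "x^(2*n+1) + (2*real n + 1) * (x * y^(2*n)) - odd_binomial_terms n x y - y^(2*n+1)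
      \<le> (x-y)^(2*n+1)"
    using power_odd_binomial_ge[OF assms(1,2), of "-y"]
    by (simp add: odd_binomial_terms_uminus_right mult.assoc)
  then show ?thesis
    using assms(3) unfolding moment_integrand_def by simp
qed

lemma minorant_le_moment_integrand_nonneg:
  fixes x y K a :: real
  assumes "n \<ge> 1" and "K \<ge> 0" and "0 \<le> x" and "y \<le> x" and "x \<le> a" and "\<bar>y\<bar> \<le> a"
    and K_le: "K * a^(2*n-1) \<le> (2*real n - 1) / 3"
  shows "minorant_term n K x y + minorant_term n K y x \<le> moment_integrand n K x y"
proof -
  obtain m where m: "n = Suc m"
    using assms(1) by (cases n) auto
  define t where "t = x * y^(2*n)"
  have "0 \<le> t"
    unfolding t_def using assms(3) by simp
  have K_bound: "K * x^(2*m) * w \<le> (2*real n - 1) / 3" if "0 \<le> w" "w \<le> a" for w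
  proof -
    have "x^(2*m) * w \<le> a^(2*m) * a"
      using assms(3,5) that by (intro mult_mono power_mono) auto
    then have "K * x^(2*m) * w \<le> K * a^(2*n-1)"
      using assms(2) by (simp add: m mult.assoc mult.commute[of a] mult_left_mono)
    then show ?thesis
      using K_le by linarith
  qed
  have "K * x^(2*n) * y^(2*n) = (K * x^(2*m) * x) * t"
    by (simp add: t_def m)
  also have "\<dots> \<le> (2*real n - 1) / 3 * t"
    using K_bound[of x] assms(3,5) \<open>0 \<le> t\<close> by (intro mult_right_mono) auto
  finally have integrand_ge: "(2*real n + 1) * t - odd_binomial_terms n x y - 2 * y^(2*n+1)
      - (2*real n - 1) / 3 * t \<le> moment_integrand n K x y"
    using moment_integrand_ge_binomial[OF assms(1,3,4), of K] unfolding t_def by linarith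
  have minorant_yx: "minorant_term n K y x = - odd_binomial_terms n x y"
    using assms(3) by (simp add: minorant_term_def)
  have "real n \<ge> 1"
    using assms(1) by simp
  show ?thesis
  proof (cases "0 \<le> y")
    case True
    have "y^(2*n+1) \<le> t"
      unfolding t_def using True assms(4) by (simp add: mult_right_mono)
    moreover have "minorant_term n K x y \<le> 0"
      using True assms(3) by (simp add: minorant_term_def odd_binomial_terms_nonneg)
    moreover have "2 * t + (2*real n - 1) / 3 * t \<le> (2*real n + 1) * t"
      unfolding distrib_right[symmetric] using \<open>real n \<ge> 1\<close> \<open>0 \<le> t\<close>
      by (intro mult_right_mono) (simp_all add: field_simps)
    ultimately show ?thesis
      using integrand_ge minorant_yx by linarith
  next
    case False
    have "minorant_term n K x y = (K * x^(2*m) * \<bar>y\<bar>) / 2 * t"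
      using False by (simp add: minorant_term_def t_def m)
    also have "\<dots> \<le> (2*real n - 1) / 6 * t"
      using K_bound[of "\<bar>y\<bar>"] assms(6) \<open>0 \<le> t\<close> by (intro mult_right_mono) (auto simp: mult_ac)
    finally have "minorant_term n K x y \<le> (2*real n - 1) / 6 * t" .
    moreover have "y^(2*n+1) \<le> 0"
      using False by (simp add: mult_nonpos_nonneg)
    moreover have "(2*real n - 1) / 3 * t + (2*real n - 1) / 6 * t \<le> (2*real n + 1) * t"
      unfolding distrib_right[symmetric] using \<open>real n \<ge> 1\<close> \<open>0 \<le> t\<close>
      by (intro mult_right_mono) (simp_all add: field_simps)
    ultimately show ?thesis
      using integrand_ge minorant_yx by linarith
  qed
qed

lemma moment_integrand_commute: "moment_integrand n K x y = moment_integrand n K y x"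
  unfolding moment_integrand_def by (simp add: abs_minus_commute mult_ac)

lemma minorant_le_moment_integrand:
  fixes x y K a :: real
  assumes "n \<ge> 1" and "K \<ge> 0" and "\<bar>x\<bar> \<le> a" and "\<bar>y\<bar> \<le> a"
    and "K * a^(2*n-1) \<le> (2*real n - 1) / 3"
  shows "minorant_term n K x y + minorant_term n K y x \<le> moment_integrand n K x y"
proof -
  have ordered: "minorant_term n K x y + minorant_term n K y x \<le> moment_integrand n K x y"
    if "y \<le> x" "\<bar>x\<bar> \<le> a" "\<bar>y\<bar> \<le> a" for x y
  proof (cases "0 \<le> x")
    case True
    then show ?thesis
      using minorant_le_moment_integrand_nonneg[OF assms(1,2) True] assms(5) that by simp
  next
    case False
    then show ?thesis
      using minorant_le_moment_integrand_nonpos[OF assms(1,2)] that by simp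
  qed
  show ?thesis
  proof (cases "y \<le> x")
    case True
    then show ?thesis
      using ordered assms(3,4) by blast
  next
    case False
    then have "minorant_term n K y x + minorant_term n K x y \<le> moment_integrand n K y x"
      using assms(3,4) by (intro ordered) auto
    then show ?thesis
      by (metis add.commute moment_integrand_commute)
  qed
qed

lemma minorant_term_eq:
  "minorant_term n K x y =
     - (\<Sum>l<n. real ((2*n+1) choose (2*l+1)) * (x^(2*l+1) * (max y 0)^(2*n-2*l)))
     - K/2 * (x^(2*n-1) * (min y 0)^(2*n+1))"
  by (simp add: minorant_term_def odd_binomial_terms_def mult_ac)

lemma integral_minorant_term_eq_0:
  fixes U V :: "'a \<Rightarrow> real"
  assumes "n \<ge> 1"
    and integrable: "\<And>f g :: real \<Rightarrow> real. continuous_on UNIV f \<Longrightarrow> continuous_on UNIV g \<Longrightarrow>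
      integrable M (\<lambda>\<omega>. f (U \<omega>) * g (V \<omega>))"
    and orthogonal: "\<And>l g. l < n \<Longrightarrow> continuous_on UNIV g \<Longrightarrow>
      (\<integral>\<omega>. U \<omega>^(2*l+1) * g (V \<omega>) \<partial>M) = 0"
  shows "(\<integral>\<omega>. minorant_term n K (U \<omega>) (V \<omega>) \<partial>M) = 0"
proof -
  have integrable_terms: "integrable M (\<lambda>\<omega>. U \<omega>^i * g (V \<omega>))"
    if "continuous_on UNIV g" for i g
    using integrable[of "\<lambda>u. u^i" g] that by (simp add: continuous_intros)
  obtain m where m: "n = Suc m"
    using assms(1) by (cases n) auto
  have "(\<integral>\<omega>. U \<omega>^(2*l+1) * max (V \<omega>) 0^(2*n-2*l) \<partial>M) = 0" if "l < n" for l
    using orthogonal[OF that, of "\<lambda>v. max v 0^(2*n-2*l)"] by (simp add: continuous_intros)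
  moreover have "(\<integral>\<omega>. U \<omega>^(2*n-1) * min (V \<omega>) 0^(2*n+1) \<partial>M) = 0"
    using orthogonal[of m "\<lambda>v. min v 0^(2*n+1)"] m by (simp add: continuous_intros)
  moreover have "integrable M (\<lambda>\<omega>. U \<omega>^(2*l+1) * max (V \<omega>) 0^(2*n-2*l))" for l
    by (rule integrable_terms) (intro continuous_intros)
  moreover have "integrable M (\<lambda>\<omega>. U \<omega>^(2*n-1) * min (V \<omega>) 0^(2*n+1))"
    by (rule integrable_terms) (intro continuous_intros)
  moreover define c where "c l = real ((2*n+1) choose (2*l+1))" for l
  ultimately show ?thesis
    unfolding minorant_term_eq c_def[symmetric]
    by (simp add: Bochner_Integration.integral_diff Bochner_Integration.integrable_sum
        Bochner_Integration.integral_sum)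
qed

locale bounded_iid_pair = prob_space M for M :: "'a measure" +
  fixes X Y :: "'a \<Rightarrow> real" and a :: real
  assumes X_measurable [measurable]: "X \<in> borel_measurable M"
    and Y_measurable [measurable]: "Y \<in> borel_measurable M"
    and indep: "indep_var borel X borel Y"
    and same_distr: "distr M borel X = distr M borel Y"
    and X_bounded: "AE \<omega> in M. \<bar>X \<omega>\<bar> \<le> a"
begin

lemma Y_bounded: "AE \<omega> in M. \<bar>Y \<omega>\<bar> \<le> a"
proof -
  have "AE x in distr M borel X. \<bar>x\<bar> \<le> a"
    using X_bounded by (subst AE_distr_iff) auto
  then have "AE x in distr M borel Y. \<bar>x\<bar> \<le> a"
    by (simp only: same_distr)
  then show ?thesis
    by (subst (asm) AE_distr_iff) auto
qed

lemma integral_Y_eq_integral_X: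
  fixes g :: "real \<Rightarrow> real"
  assumes "g \<in> borel_measurable borel"
  shows "(\<integral>\<omega>. g (Y \<omega>) \<partial>M) = (\<integral>\<omega>. g (X \<omega>) \<partial>M)"
  using integral_distr[OF Y_measurable assms] integral_distr[OF X_measurable assms]
  by (simp add: same_distr)

lemma integrable_continuous_pair:
  fixes h :: "real \<Rightarrow> real \<Rightarrow> real"
  assumes "continuous_on UNIV (\<lambda>z. h (fst z) (snd z))"
  shows "integrable M (\<lambda>\<omega>. h (X \<omega>) (Y \<omega>))"
proof -
  have "compact ((\<lambda>z. h (fst z) (snd z)) ` ({-a..a} \<times> {-a..a}))"
    by (intro compact_continuous_image continuous_on_subset[OF assms] compact_Times compact_Icc) auto
  then obtain B where B: "\<And>x y. \<bar>x\<bar> \<le> a \<Longrightarrow> \<bar>y\<bar> \<le> a \<Longrightarrow> \<bar>h x y\<bar> \<le> B"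
    by (fastforce dest!: compact_imp_bounded simp: bounded_iff)
  have "(\<lambda>z. h (fst z) (snd z)) \<in> borel_measurable borel"
    using assms by (rule borel_measurable_continuous_onI)
  from measurable_compose[OF borel_measurable_Pair[OF X_measurable Y_measurable] this]
  have "(\<lambda>\<omega>. h (X \<omega>) (Y \<omega>)) \<in> borel_measurable M"
    by simp
  moreover have "AE \<omega> in M. norm (h (X \<omega>) (Y \<omega>)) \<le> B"
    using X_bounded Y_bounded by eventually_elim (simp add: B)
  ultimately show ?thesis
    by (intro integrable_const_bound)
qed

lemma integral_mult_indep:
  fixes f g :: "real \<Rightarrow> real"
  assumes "continuous_on UNIV f" and "continuous_on UNIV g"
  shows "(\<integral>\<omega>. f (X \<omega>) * g (Y \<omega>) \<partial>M) = (\<integral>\<omega>. f (X \<omega>) \<partial>M) * (\<integral>\<omega>. g (Y \<omega>) \<partial>M)"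
proof (rule indep_var_lebesgue_integral)
  show "indep_var borel (\<lambda>\<omega>. f (X \<omega>)) borel (\<lambda>\<omega>. g (Y \<omega>))"
    using indep_var_compose[OF indep, of f borel g borel] assms
    by (simp add: comp_def borel_measurable_continuous_onI)
  have "continuous_on UNIV (\<lambda>z::real \<times> real. f (fst z))" "continuous_on UNIV (\<lambda>z::real \<times> real. g (snd z))"
    by (auto intro: continuous_on_compose2[OF assms(1) continuous_on_fst[OF continuous_on_id]]
        continuous_on_compose2[OF assms(2) continuous_on_snd[OF continuous_on_id]])
  then show "integrable M (\<lambda>\<omega>. f (X \<omega>))" "integrable M (\<lambda>\<omega>. g (Y \<omega>))"
    by (auto dest: integrable_continuous_pair)
qed

lemma integral_minorant_term_X_Y_eq_0:
  assumes "n \<ge> 1" and odd_moments: "\<And>l. l < n \<Longrightarrow> (\<integral>\<omega>. X \<omega>^(2*l+1) \<partial>M) = 0"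
  shows "(\<integral>\<omega>. minorant_term n K (X \<omega>) (Y \<omega>) \<partial>M) = 0"
    and "(\<integral>\<omega>. minorant_term n K (Y \<omega>) (X \<omega>) \<partial>M) = 0"
proof -
  have continuous_product: "continuous_on UNIV (\<lambda>z. f (fst z) * g (snd z))"
    if "continuous_on UNIV f" "continuous_on UNIV g" for f g :: "real \<Rightarrow> real"
    using that by (intro continuous_intros continuous_on_compose2[OF _ continuous_on_fst]
      continuous_on_compose2[OF _ continuous_on_snd]) auto
  show "(\<integral>\<omega>. minorant_term n K (X \<omega>) (Y \<omega>) \<partial>M) = 0"
  proof (rule integral_minorant_term_eq_0[OF assms(1)])
    show "integrable M (\<lambda>\<omega>. f (X \<omega>) * g (Y \<omega>))"
      if "continuous_on UNIV f" "continuous_on UNIV g" for f g :: "real \<Rightarrow> real"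
      using integrable_continuous_pair[OF continuous_product[OF that]] by simp
    show "(\<integral>\<omega>. X \<omega>^(2*l+1) * g (Y \<omega>) \<partial>M) = 0"
      if "l < n" "continuous_on UNIV g" for l g
      using integral_mult_indep[of "\<lambda>x. x^(2*l+1)" g] odd_moments[OF that(1)] that(2)
      by (simp add: continuous_intros)
  qed
  show "(\<integral>\<omega>. minorant_term n K (Y \<omega>) (X \<omega>) \<partial>M) = 0"
  proof (rule integral_minorant_term_eq_0[OF assms(1)])
    show "integrable M (\<lambda>\<omega>. f (Y \<omega>) * g (X \<omega>))"
      if "continuous_on UNIV f" "continuous_on UNIV g" for f g :: "real \<Rightarrow> real"
      using integrable_continuous_pair[OF continuous_product[OF that(2,1)]] by (simp add: mult.commute)
    show "(\<integral>\<omega>. Y \<omega>^(2*l+1) * g (X \<omega>) \<partial>M) = 0"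
      if "l < n" "continuous_on UNIV g" for l g
      using integral_mult_indep[of g "\<lambda>x. x^(2*l+1)"] integral_Y_eq_integral_X[of "\<lambda>x. x^(2*l+1)"]
        odd_moments[OF that(1)] that(2)
      by (simp add: continuous_intros mult.commute)
  qed
qed

lemma integral_moment_integrand:
  "(\<integral>\<omega>. moment_integrand n K (X \<omega>) (Y \<omega>) \<partial>M) =
     (\<integral>\<omega>. \<bar>X \<omega> - Y \<omega>\<bar>^(2*n+1) \<partial>M) - 2 * (\<integral>\<omega>. X \<omega>^(2*n+1) \<partial>M)
     - K * (\<integral>\<omega>. X \<omega>^(2*n) \<partial>M)^2"
proof -
  have integrable_terms:
      "integrable M (\<lambda>\<omega>. \<bar>X \<omega> - Y \<omega>\<bar>^(2*n+1))"
      "integrable M (\<lambda>\<omega>. X \<omega>^(2*n+1))" "integrable M (\<lambda>\<omega>. Y \<omega>^(2*n+1))"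
      "integrable M (\<lambda>\<omega>. K * X \<omega>^(2*n) * Y \<omega>^(2*n))"
    by (rule integrable_continuous_pair, intro continuous_intros)+
  have "(\<integral>\<omega>. Y \<omega>^(2*n+1) \<partial>M) = (\<integral>\<omega>. X \<omega>^(2*n+1) \<partial>M)"
    by (rule integral_Y_eq_integral_X) simp
  moreover have "(\<integral>\<omega>. K * X \<omega>^(2*n) * Y \<omega>^(2*n) \<partial>M) = K * (\<integral>\<omega>. X \<omega>^(2*n) \<partial>M)^2"
    using integral_mult_indep[of "\<lambda>x. K * x^(2*n)" "\<lambda>x. x^(2*n)"]
      integral_Y_eq_integral_X[of "\<lambda>x. x^(2*n)"]
    by (simp add: continuous_intros power2_eq_square)
  ultimately show ?thesis
    unfolding moment_integrand_def using integrable_terms by simp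
qed

theorem moment_inequality:
  assumes "n \<ge> 1" and "K \<ge> 0" and "K * a^(2*n-1) \<le> (2*real n - 1) / 3"
    and odd_moments: "\<And>l. l < n \<Longrightarrow> (\<integral>\<omega>. X \<omega>^(2*l+1) \<partial>M) = 0"
  shows "(\<integral>\<omega>. \<bar>X \<omega> - Y \<omega>\<bar>^(2*n+1) \<partial>M) - 2 * (\<integral>\<omega>. X \<omega>^(2*n+1) \<partial>M)
     - K * (\<integral>\<omega>. X \<omega>^(2*n) \<partial>M)^2 \<ge> 0"
proof -
  let ?Z = "\<lambda>\<omega>. minorant_term n K (X \<omega>) (Y \<omega>) + minorant_term n K (Y \<omega>) (X \<omega>)"
  have "integrable M (\<lambda>\<omega>. minorant_term n K (X \<omega>) (Y \<omega>))"
    and "integrable M (\<lambda>\<omega>. minorant_term n K (Y \<omega>) (X \<omega>))"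
    by (rule integrable_continuous_pair,
        simp add: minorant_term_def odd_binomial_terms_def continuous_intros)+
  then have Z_integrable: "integrable M ?Z" and Z_mean: "(\<integral>\<omega>. ?Z \<omega> \<partial>M) = 0"
    using integral_minorant_term_X_Y_eq_0[OF assms(1) odd_moments] by simp_all
  have "integrable M (\<lambda>\<omega>. moment_integrand n K (X \<omega>) (Y \<omega>))"
    by (rule integrable_continuous_pair) (simp add: moment_integrand_def continuous_intros)
  moreover have "AE \<omega> in M. ?Z \<omega> \<le> moment_integrand n K (X \<omega>) (Y \<omega>)"
    using X_bounded Y_bounded
    by eventually_elim (rule minorant_le_moment_integrand[OF assms(1-2) _ _ assms(3)])
  ultimately have "(\<integral>\<omega>. ?Z \<omega> \<partial>M) \<le> (\<integral>\<omega>. moment_integrand n K (X \<omega>) (Y \<omega>) \<partial>M)"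
    using Z_integrable by (intro integral_mono_AE)
  then show ?thesis
    by (simp add: Z_mean integral_moment_integrand)
qed

end

lemma powr_inverse_power:
  fixes c :: real
  assumes "0 < p" and "0 \<le> c"
  shows "(c powr (1 / real p))^p = c"
  using assms by (simp add: root_powr_inverse[symmetric])

theorem proposition1:
  fixes P :: "'a measure" and X Y :: "'a \<Rightarrow> real" and n :: nat and K :: real
  assumes "prob_space P"
    and "n \<ge> 1"
    and "K > 0"
    and "X \<in> borel_measurable P" and "Y \<in> borel_measurable P"
    and "prob_space.indep_var P borel X borel Y"
    and "distr P borel X = distr P borel Y"
    and "AE \<omega> in P. \<bar>X \<omega>\<bar> \<le> ((2 * real n - 1) / (3 * K)) powr (1 / (2 * real n - 1))"
    and "\<And>j. j \<in> {1..n} \<Longrightarrow> prob_space.expectation P (\<lambda>\<omega>. X \<omega> ^ (2 * j - 1)) = 0"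
  shows "prob_space.expectation P (\<lambda>\<omega>. \<bar>X \<omega> - Y \<omega>\<bar> ^ (2 * n + 1))
           - 2 * prob_space.expectation P (\<lambda>\<omega>. X \<omega> ^ (2 * n + 1))
           - K * (prob_space.expectation P (\<lambda>\<omega>. X \<omega> ^ (2 * n))) ^ 2 \<ge> 0"
proof -
  define a where "a = ((2 * real n - 1) / (3 * K)) powr (1 / (2 * real n - 1))"
  interpret bounded_iid_pair P X Y a
    using assms(1,4-8) unfolding a_def
    by (intro bounded_iid_pair.intro bounded_iid_pair_axioms.intro)
  show ?thesis
  proof (rule moment_inequality[OF assms(2)])
    have "2 * real n - 1 = real (2*n-1)"
      using assms(2) by (simp add: of_nat_diff)
    then have "a^(2*n-1) = (2 * real n - 1) / (3 * K)"
      unfolding a_def by (simp only:) (rule powr_inverse_power; use assms(2,3) in simp)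
    then show "K \<ge> 0" and "K * a^(2*n-1) \<le> (2*real n - 1) / 3"
      using assms(3) by simp_all
    show "expectation (\<lambda>\<omega>. X \<omega>^(2*l+1)) = 0" if "l < n" for l
      using assms(9)[of "l+1"] that by simp
  qed
qed

end
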